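(* Fix $n\ge 2$, a dictator agent $t\in\{1,\dots,n\}$ and a parameter $\varepsilon\in(0,\frac12)$, and let $g$ be any function assigning to each profile $\mathbf{x}\in\mathbb{R}^n$ a point $g(\mathbf{x})\in(-\infty,\,x_l-L)\cup(x_l+2L,\,+\infty)$, where $x_l=\min\mathbf{x}$, $x_r=\max\mathbf{x}$, $L=x_r-x_l$. Let $f$ be the mechanism that on $\mathbf{x}$ outputs $l_1=x_t$ and $$l_2=\begin{cases} x_t+\max\left\{\left(\tfrac{2}{\varepsilon}-2\right)(x_t-x_l),\; x_r-x_t\right\} & \text{if } x_t\in[x_l,\,x_l+\varepsilon L],\\[2pt] g(\mathbf{x}) & \text{if } x_t\in(x_l+\varepsilon L,\,x_l+(1-\varepsilon)L),\\[2pt] x_t-\max\left\{x_t-x_l,\; \left(\tfrac{2}{\varepsilon}-2\right)(x_r-x_t)\right\} & \text{if } x_t\in[x_l+(1-\varepsilon)L,\,x_r] \text{ and not in the first case}.\end{cases}$$ Then for every profile $\mathbf{x}\in\mathbb{R}^n$, $SC(f,\mathbf{x})\le\left(\frac{1}{\varepsilon}-1\right)(n-1)\,OPT(\mathbf{x})$.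
   Context: Two-facility game on a line: agent $i$ has location $x_i\in\mathbb{R}$. For facility locations $\{l_1,l_2\}$, an agent at $y$ has cost $\min\{|l_1-y|,|l_2-y|\}$. $SC(f,\mathbf{x})$ is the sum over all agents of their costs under $f(\mathbf{x})$, and $OPT(\mathbf{x})=\min_{l_1,l_2\in\mathbb{R}}\sum_i\min\{|l_1-x_i|,|l_2-x_i|\}$. *)

theory Defs
  imports "HOL-Analysis.Analysis"
begin

text \<open>Profiles: agents are indexed by 0..<n, the location of agent i is x i.\<close>

definition agent_cost :: "real \<Rightarrow> real \<Rightarrow> real \<Rightarrow> real" where
  "agent_cost l1 l2 y = min \<bar>l1 - y\<bar> \<bar>l2 - y\<bar>"

definition SC :: "nat \<Rightarrow> (real \<times> real) \<Rightarrow> (nat \<Rightarrow> real) \<Rightarrow> real" where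
  "SC n ls x = (\<Sum>i<n. agent_cost (fst ls) (snd ls) (x i))"

definition OPT :: "nat \<Rightarrow> (nat \<Rightarrow> real) \<Rightarrow> real" where
  "OPT n x = (INF p \<in> (UNIV :: (real \<times> real) set). SC n p x)"

definition xmin :: "nat \<Rightarrow> (nat \<Rightarrow> real) \<Rightarrow> real" where
  "xmin n x = Min (x ` {..<n})"

definition xmax :: "nat \<Rightarrow> (nat \<Rightarrow> real) \<Rightarrow> real" where
  "xmax n x = Max (x ` {..<n})"

definition mech :: "nat \<Rightarrow> nat \<Rightarrow> real \<Rightarrow> ((nat \<Rightarrow> real) \<Rightarrow> real) \<Rightarrow> (nat \<Rightarrow> real) \<Rightarrow> real \<times> real" where
  "mech n t \<epsilon> g x =
    (let xl = xmin n x; xr = xmax n x; L = xr - xl; xt = x t in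
     (xt,
      if xl \<le> xt \<and> xt \<le> xl + \<epsilon> * L then xt + max ((2 / \<epsilon> - 2) * (xt - xl)) (xr - xt)
      else if xl + \<epsilon> * L < xt \<and> xt < xl + (1 - \<epsilon>) * L then g x
      else xt - max (xt - xl) ((2 / \<epsilon> - 2) * (xr - xt))))"

end

theory Submission
  imports Defs
begin

text \<open>Any two facilities leave one of three sorted agents at distance at least the smaller of the
  two gaps between them, so OPT dominates such gaps. The dictator pays nothing. When \<open>x\<^sub>t\<close> lies
  near \<open>x\<^sub>l\<close>, every agent left of \<open>x\<^sub>t\<close> pays at most \<open>x\<^sub>t - x\<^sub>l \<le> OPT\<close>, and an agent right of \<open>x\<^sub>t\<close>
  either lies between \<open>x\<^sub>t\<close> and \<open>l\<^sub>2 = x\<^sub>r\<close> (cost at most a gap) or pays at most half the distance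
  \<open>(2/\<epsilon> - 2)(x\<^sub>t - x\<^sub>l)\<close> between the facilities; the case near \<open>x\<^sub>r\<close> is the mirror image. In the
  middle case the smaller gap \<open>m\<close> around \<open>x\<^sub>t\<close> exceeds \<open>\<epsilon>L\<close>, and every agent is within
  \<open>L - m < (1/\<epsilon> - 1) m \<le> (1/\<epsilon> - 1) OPT\<close> of \<open>x\<^sub>t\<close>.
  Summing over the \<open>n - 1\<close> other agents gives the bound; the constraint on \<open>g\<close> is irrelevant
  here (it serves strategyproofness).\<close>

lemma agent_cost_nonneg: "0 \<le> agent_cost a b y"
  unfolding agent_cost_def by simp

lemma agent_cost_le_left: "agent_cost a b y \<le> \<bar>a - y\<bar>"
  unfolding agent_cost_def by simp

lemma agent_cost_le_right: "agent_cost a b y \<le> \<bar>b - y\<bar>"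
  unfolding agent_cost_def by simp

lemma agent_cost_uminus: "agent_cost (- a) (- b) (- y) = agent_cost a b y"
  unfolding agent_cost_def by simp

lemma agent_cost_three_points:
  fixes a b p q r :: real
  assumes "p < q" "q < r"
  shows "min (q - p) (r - q) \<le> agent_cost a b p + agent_cost a b q + agent_cost a b r"
  using assms unfolding agent_cost_def by (smt (verit))

lemma SC_nonneg: "0 \<le> SC n p x"
  unfolding SC_def by (intro sum_nonneg) (simp add: agent_cost_nonneg)

lemma SC_ge_min_gap:
  assumes "i < n" "j < n" "k < n" "x i \<le> x j" "x j \<le> x k"
  shows "min (x j - x i) (x k - x j) \<le> SC n p x"
proof (cases "x i = x j \<or> x j = x k")
  case True
  then show ?thesis using SC_nonneg[of n p x] by auto
next
  case False
  then have lt: "x i < x j" "x j < x k" using assms by auto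
  then have "distinct [i, j, k]" by auto
  then have "min (x j - x i) (x k - x j) \<le> (\<Sum>m\<in>{i, j, k}. agent_cost (fst p) (snd p) (x m))"
    using agent_cost_three_points[OF lt, of "fst p" "snd p"] by simp
  also have "\<dots> \<le> SC n p x"
    unfolding SC_def by (rule sum_mono2) (use assms in \<open>auto simp: agent_cost_nonneg\<close>)
  finally show ?thesis .
qed

lemma SC_le_mult_OPT:
  assumes "0 < K" and "\<And>p. S \<le> K * SC n p x"
  shows "S \<le> K * OPT n x"
proof -
  have "S / K \<le> OPT n x"
    unfolding OPT_def by (rule cINF_greatest) (use assms in \<open>auto simp: field_simps mult.commute\<close>)
  then show ?thesis
    using assms(1) by (simp add: field_simps mult.commute)
qed

lemma SC_dictator_le:
  assumes "t < n" and "\<And>i. i < n \<Longrightarrow> agent_cost (x t) b (x i) \<le> B"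
  shows "SC n (x t, b) x \<le> real (n - 1) * B"
proof -
  have "SC n (x t, b) x = (\<Sum>i\<in>{..<n} - {t}. agent_cost (x t) b (x i))"
    unfolding SC_def using assms(1) by (simp add: sum.remove agent_cost_def)
  also have "\<dots> \<le> real (card ({..<n} - {t})) * B"
    by (rule sum_bounded_above) (use assms(2) in auto)
  also have "\<dots> = real (n - 1) * B"
    using assms(1) by simp
  finally show ?thesis .
qed

lemma xmin_le: "i < n \<Longrightarrow> xmin n x \<le> x i"
  unfolding xmin_def by simp

lemma xmax_ge: "i < n \<Longrightarrow> x i \<le> xmax n x"
  unfolding xmax_def by simp

lemma xmin_attained: "0 < n \<Longrightarrow> \<exists>i<n. x i = xmin n x"
  unfolding xmin_def using Min_in[of "x ` {..<n}"] by fastforce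

lemma xmax_attained: "0 < n \<Longrightarrow> \<exists>i<n. x i = xmax n x"
  unfolding xmax_def using Max_in[of "x ` {..<n}"] by fastforce

lemma agent_cost_left_case:
  fixes xl xt xr y c D :: real
  assumes "xl \<le> y" "y \<le> xr" "xl \<le> xt" "xt \<le> xr" "1 \<le> c" "xt - xl \<le> D"
    and gap: "xt \<le> y \<Longrightarrow> min (y - xt) (xr - y) \<le> D"
  shows "agent_cost xt (xt + max (2 * c * (xt - xl)) (xr - xt)) y \<le> c * D"
proof -
  define l2 where "l2 = xt + max (2 * c * (xt - xl)) (xr - xt)"
  have "D \<le> c * D"
    using assms mult_right_mono[of 1 c D] by simp
  consider "y \<le> xt" | "xt < y" "l2 = xr" | "xt < y" "l2 = xt + 2 * c * (xt - xl)" "xr < l2"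
    unfolding l2_def by linarith
  then have "agent_cost xt l2 y \<le> c * D"
  proof cases
    case 1
    then show ?thesis
      using agent_cost_le_left[of xt l2 y] assms \<open>D \<le> c * D\<close> by linarith
  next
    case 2
    then show ?thesis
      using agent_cost_le_left[of xt l2 y] agent_cost_le_right[of xt l2 y] assms gap \<open>D \<le> c * D\<close>
      by linarith
  next
    case 3
    have "agent_cost xt l2 y \<le> c * (xt - xl)"
      using agent_cost_le_left[of xt l2 y] agent_cost_le_right[of xt l2 y] 3 assms by linarith
    also have "\<dots> \<le> c * D"
      using assms by (intro mult_left_mono) auto
    finally show ?thesis .
  qed
  then show ?thesis
    unfolding l2_def .
qed

lemma agent_cost_right_case:
  fixes xl xt xr y c D :: real
  assumes "xl \<le> y" "y \<le> xr" "xl \<le> xt" "xt \<le> xr" "1 \<le> c" "xr - xt \<le> D"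
    and gap: "y \<le> xt \<Longrightarrow> min (y - xl) (xt - y) \<le> D"
  shows "agent_cost xt (xt - max (xt - xl) (2 * c * (xr - xt))) y \<le> c * D"
proof -
  have "agent_cost (- xt) (- xt + max (2 * c * (- xt - - xr)) (- xl - - xt)) (- y) \<le> c * D"
    by (rule agent_cost_left_case) (use assms in \<open>auto simp: min.commute\<close>)
  then show ?thesis
    using agent_cost_uminus[of xt "xt - max (xt - xl) (2 * c * (xr - xt))" y]
    by (simp add: max.commute)
qed

lemma agent_cost_middle_case:
  fixes xl xt xr y \<epsilon> D :: real
  assumes "xl \<le> y" "y \<le> xr" "0 < \<epsilon>" "\<epsilon> \<le> 1"
    and far: "\<epsilon> * (xr - xl) < min (xt - xl) (xr - xt)"
    and gap: "min (xt - xl) (xr - xt) \<le> D"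
  shows "agent_cost xt l2 y \<le> (1 / \<epsilon> - 1) * D"
proof -
  define m where "m = min (xt - xl) (xr - xt)"
  have "xr - xl < m / \<epsilon>"
    using far assms(3) unfolding m_def by (simp add: pos_less_divide_eq mult.commute)
  have "agent_cost xt l2 y \<le> \<bar>xt - y\<bar>"
    by (rule agent_cost_le_left)
  also have "\<dots> \<le> (xr - xl) - m"
    using assms(1,2) unfolding m_def by auto
  also have "\<dots> \<le> (1 / \<epsilon> - 1) * m"
    using \<open>xr - xl < m / \<epsilon>\<close> by (simp add: algebra_simps)
  also have "\<dots> \<le> (1 / \<epsilon> - 1) * D"
    using gap assms(3,4) unfolding m_def by (intro mult_left_mono) auto
  finally show ?thesis .
qed

lemma agent_cost_three_cases:
  fixes xl xt xr y \<epsilon> D l2 :: real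
  defines "L \<equiv> xr - xl"
  assumes "xl \<le> y" "y \<le> xr" "xl \<le> xt" "xt \<le> xr" "0 < \<epsilon>" "\<epsilon> < 1/2"
    and gap_t: "min (xt - xl) (xr - xt) \<le> D"
    and gap_right: "xt \<le> y \<Longrightarrow> min (y - xt) (xr - y) \<le> D"
    and gap_left: "y \<le> xt \<Longrightarrow> min (y - xl) (xt - y) \<le> D"
  shows "agent_cost xt
      (if xl \<le> xt \<and> xt \<le> xl + \<epsilon> * L then xt + max ((2 / \<epsilon> - 2) * (xt - xl)) (xr - xt)
       else if xl + \<epsilon> * L < xt \<and> xt < xl + (1 - \<epsilon>) * L then l2
       else xt - max (xt - xl) ((2 / \<epsilon> - 2) * (xr - xt))) y
    \<le> (1 / \<epsilon> - 1) * D"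
proof -
  define c where "c = 1 / \<epsilon> - 1"
  have c: "1 \<le> c" "2 / \<epsilon> - 2 = 2 * c"
    using assms(6,7) unfolding c_def by (auto simp: field_simps)
  have "(2 * \<epsilon>) * L \<le> 1 * L"
    using assms(4,5,7) unfolding L_def by (intro mult_right_mono) auto
  then have eps_L: "2 * (\<epsilon> * L) \<le> L" "(1 - \<epsilon>) * L = L - \<epsilon> * L"
    by (simp_all add: algebra_simps)
  consider "xt \<le> xl + \<epsilon> * L" | "xl + \<epsilon> * L < xt" "xt < xl + (1 - \<epsilon>) * L"
    | "xl + (1 - \<epsilon>) * L \<le> xt" "\<not> xt \<le> xl + \<epsilon> * L"
    by linarith
  then show ?thesis
  proof cases
    case 1
    then have "xt - xl \<le> D"
      using gap_t eps_L unfolding L_def min_def by (auto split: if_splits)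
    then show ?thesis
      using 1 assms(2-5) c gap_right by (simp add: agent_cost_left_case flip: c_def)
  next
    case 2
    then have "\<epsilon> * (xr - xl) < min (xt - xl) (xr - xt)"
      using eps_L(2) unfolding L_def by simp
    then show ?thesis
      using 2 assms(2,3,6,7) gap_t by (simp add: agent_cost_middle_case)
  next
    case 3
    then have "xr - xt \<le> D"
      using gap_t eps_L unfolding L_def min_def by (auto split: if_splits)
    then show ?thesis
      using 3 eps_L assms(2-5) c gap_left by (simp add: agent_cost_right_case flip: c_def)
  qed
qed

lemma mech_agent_cost_le:
  assumes "t < n" "i < n" "0 < \<epsilon>" "\<epsilon> < 1/2"
  shows "agent_cost (x t) (snd (mech n t \<epsilon> g x)) (x i) \<le> (1 / \<epsilon> - 1) * SC n p x"
proof -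
  obtain il ir where il: "il < n" "x il = xmin n x" and ir: "ir < n" "x ir = xmax n x"
    using xmin_attained[of n x] xmax_attained[of n x] assms(1) by auto
  have "xmin n x \<le> x j" "x j \<le> xmax n x" if "j \<in> {i, t}" for j
    using that assms xmin_le xmax_ge by auto
  then show ?thesis
    unfolding mech_def Let_def snd_conv
    using SC_ge_min_gap[of il n t ir x p] SC_ge_min_gap[of t n i ir x p]
      SC_ge_min_gap[of il n i t x p] il ir assms
    by (intro agent_cost_three_cases) auto
qed

theorem theorem6:
  fixes n t :: nat and \<epsilon> :: real and g :: "(nat \<Rightarrow> real) \<Rightarrow> real"
  assumes "n \<ge> 2" and "t < n" and "0 < \<epsilon>" and "\<epsilon> < 1/2"
    and "\<And>x. g x < xmin n x - (xmax n x - xmin n x)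
             \<or> g x > xmin n x + 2 * (xmax n x - xmin n x)"
  shows "\<forall>x :: nat \<Rightarrow> real.
           SC n (mech n t \<epsilon> g x) x \<le> (1 / \<epsilon> - 1) * real (n - 1) * OPT n x"
proof
  fix x :: "nat \<Rightarrow> real"
  have mech: "mech n t \<epsilon> g x = (x t, snd (mech n t \<epsilon> g x))"
    unfolding mech_def Let_def by simp
  have "1 < 1 / \<epsilon>" and "0 < real (n - 1)"
    using assms(1,3,4) by (auto simp: field_simps)
  then have "0 < (1 / \<epsilon> - 1) * real (n - 1)"
    by simp
  moreover have "SC n (mech n t \<epsilon> g x) x \<le> (1 / \<epsilon> - 1) * real (n - 1) * SC n p x" for p
  proof -
    have "SC n (x t, snd (mech n t \<epsilon> g x)) x \<le> real (n - 1) * ((1 / \<epsilon> - 1) * SC n p x)"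
      using SC_dictator_le mech_agent_cost_le assms(2-4) by blast
    then show ?thesis
      using mech by (simp add: mult_ac)
  qed
  ultimately show "SC n (mech n t \<epsilon> g x) x \<le> (1 / \<epsilon> - 1) * real (n - 1) * OPT n x"
    by (rule SC_le_mult_OPT)
qed

end
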